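(* Let $d\ge1$, $L\ge1$ be integers and ${\Gamma}=\{x\in\mathbb{Z}^d\mid 0\le x_\mu<L\}$ with periodic boundary conditions. Let $c(x)$ be a real (or complex) periodic field on ${\Gamma}$ with $\sum_{x\in{\Gamma}}c(x)=0$. Then there exists a periodic current $b_\mu(x)$, $\mu=1,\dots,d$, on ${\Gamma}$ of the form $b_\mu(x)=\sum_{y\in{\Gamma}}\beta_\mu(x,y)c(y)$ with real coefficients $\beta_\mu(x,y)$ not depending on $c$, such that $$\sum_{\mu=1}^d\partial^*_\mu b_\mu(x)=c(x)\quad\text{and}\quad |b_\mu(x)|\le 2L\max_{y\in{\Gamma}}|c(y)|\quad\text{for all }x,\mu.$$
   Context: $\hat\mu$ denotes the unit vector in direction $\mu$, and $\partial^*_\mu f(x)=f(x)-f(x-\hat\mu)$ is the backward difference operator, with points of ${\Gamma}$ understood periodically (modulo $L$ in each coordinate). *)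

theory Defs
  imports Complex_Main
begin

text \<open>Points of the periodic lattice Gamma = {x in Z^d | 0 <= x_mu < L}, with directions
  indexed by 0..d-1 (the paper's 1..d). A point is a function nat => nat, with
  coordinates beyond d fixed to 0 so that points are uniquely represented.\<close>
definition lattice :: "nat \<Rightarrow> nat \<Rightarrow> (nat \<Rightarrow> nat) set" where
  "lattice d L = {x. (\<forall>i<d. x i < L) \<and> (\<forall>i\<ge>d. x i = 0)}"

definition shift_back :: "nat \<Rightarrow> (nat \<Rightarrow> nat) \<Rightarrow> nat \<Rightarrow> (nat \<Rightarrow> nat)" where
  "shift_back L x \<mu> = x(\<mu> := (x \<mu> + L - 1) mod L)"

definition bwd_diff :: "nat \<Rightarrow> ((nat \<Rightarrow> nat) \<Rightarrow> 'a::ab_group_add) \<Rightarrow> nat \<Rightarrow> (nat \<Rightarrow> nat) \<Rightarrow> 'a" where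
  "bwd_diff L f \<mu> x = f x - f (shift_back L x \<mu>)"

end

theory Submission
  imports Defs
begin

text \<open>Let \<open>A\<^sub>k c\<close> be the average of \<open>c\<close> over the first \<open>k\<close> coordinates. Then \<open>A\<^sub>0 c = c\<close> and
  \<open>A\<^sub>d c = 0\<close> because \<open>c\<close> has mean zero, so \<open>c\<close> telescopes into \<open>\<Sum>\<^sub>\<mu> (A\<^sub>\<mu> c - A\<^sub>\<mu>\<^sub>+\<^sub>1 c)\<close>.
  Each summand \<open>g\<^sub>\<mu>\<close> sums to zero along every line in direction \<open>\<mu>\<close>, so its partial sums along
  that line, \<open>b\<^sub>\<mu>(x) = \<Sum>\<^bsub>t \<le> x\<^sub>\<mu>\<^esub> g\<^sub>\<mu>(x[\<mu> := t])\<close>, form a periodic function with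
  \<open>\<partial>\<^sup>*\<^sub>\<mu> b\<^sub>\<mu> = g\<^sub>\<mu>\<close>. Averages are bounded by \<open>max |c|\<close>, so \<open>|g\<^sub>\<mu>| \<le> 2 max |c|\<close>, and a partial
  sum has at most \<open>L\<close> terms.\<close>

lemma finite_lattice: "finite (lattice d L)"
proof (rule finite_subset)
  show "lattice d L \<subseteq> {x. \<forall>i. (i \<in> {..<d} \<longrightarrow> x i \<in> {..<L}) \<and> (i \<notin> {..<d} \<longrightarrow> x i = 0)}"
    by (auto simp: lattice_def)
qed (intro finite_set_of_finite_funs; simp)

lemma fun_upd_in_lattice: "x \<in> lattice d L \<Longrightarrow> \<mu> < d \<Longrightarrow> t < L \<Longrightarrow> x(\<mu> := t) \<in> lattice d L"
  by (auto simp: lattice_def)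

lemma lattice_coord_less: "x \<in> lattice d L \<Longrightarrow> \<mu> < d \<Longrightarrow> x \<mu> < L"
  by (simp add: lattice_def)

definition avg_kernel :: "nat \<Rightarrow> nat \<Rightarrow> (nat \<Rightarrow> nat) \<Rightarrow> (nat \<Rightarrow> nat) \<Rightarrow> real" where
  "avg_kernel L k x y = (if \<forall>i\<ge>k. y i = x i then 1 / real L ^ k else 0)"

definition partial_avg ::
    "nat \<Rightarrow> nat \<Rightarrow> nat \<Rightarrow> ((nat \<Rightarrow> nat) \<Rightarrow> 'a::real_vector) \<Rightarrow> (nat \<Rightarrow> nat) \<Rightarrow> 'a" where
  "partial_avg d L k f x = (\<Sum>y\<in>lattice d L. avg_kernel L k x y *\<^sub>R f y)"

lemma avg_kernel_0: "avg_kernel L 0 x y = (if y = x then 1 else 0)"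
  by (auto simp: avg_kernel_def fun_eq_iff)

lemma avg_kernel_fun_upd: "avg_kernel L (Suc k) (x(k := t)) y = avg_kernel L (Suc k) x y"
  by (simp add: avg_kernel_def)

lemma avg_kernel_nonneg: "avg_kernel L k x y \<ge> 0"
  by (simp add: avg_kernel_def)

lemma sum_avg_kernel_line:
  assumes "k < d" "y \<in> lattice d L"
  shows "(\<Sum>t<L. avg_kernel L k (x(k := t)) y) = real L * avg_kernel L (Suc k) x y"
proof -
  let ?P = "\<forall>i\<ge>Suc k. y i = x i"
  have yk: "y k < L"
    using assms by (simp add: lattice_coord_less)
  have "(\<forall>i\<ge>k. y i = (x(k := t)) i) \<longleftrightarrow> t = y k \<and> ?P" for t
    by (auto simp: Suc_le_eq)
  then have "avg_kernel L k (x(k := t)) y = (if t = y k then if ?P then 1 / real L ^ k else 0 else 0)" for t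
    unfolding avg_kernel_def by simp
  then have "(\<Sum>t<L. avg_kernel L k (x(k := t)) y) = (if ?P then 1 / real L ^ k else 0)"
    using yk by (simp only: sum.delta finite_lessThan lessThan_iff if_True)
  also have "\<dots> = real L * avg_kernel L (Suc k) x y"
    using yk by (simp add: avg_kernel_def)
  finally show ?thesis .
qed

lemma sum_avg_kernel:
  assumes "k \<le> d" "x \<in> lattice d L"
  shows "(\<Sum>y\<in>lattice d L. avg_kernel L k x y) = 1"
  using assms
proof (induction k arbitrary: x)
  case 0
  then show ?case by (simp add: avg_kernel_0 finite_lattice sum.delta')
next
  case (Suc k)
  then have k: "k < d" by simp
  have L: "L > 0"
    using lattice_coord_less[OF Suc.prems(2) k] by simp
  have "real L = (\<Sum>t<L. \<Sum>y\<in>lattice d L. avg_kernel L k (x(k := t)) y)"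
    using Suc.IH k Suc.prems(2) by (simp add: fun_upd_in_lattice)
  also have "\<dots> = (\<Sum>y\<in>lattice d L. \<Sum>t<L. avg_kernel L k (x(k := t)) y)"
    by (rule sum.swap)
  also have "\<dots> = real L * (\<Sum>y\<in>lattice d L. avg_kernel L (Suc k) x y)"
    by (simp add: sum_distrib_left sum_avg_kernel_line[OF k] cong: sum.cong)
  finally show ?case
    using L by simp
qed

lemma partial_avg_0:
  assumes "x \<in> lattice d L"
  shows "partial_avg d L 0 f x = f x"
proof -
  have "avg_kernel L 0 x y *\<^sub>R f y = (if y = x then f y else 0)" for y
    by (simp add: avg_kernel_0)
  then show ?thesis
    using assms by (simp add: partial_avg_def finite_lattice sum.delta')
qed

lemma partial_avg_full:
  assumes "x \<in> lattice d L"
  shows "partial_avg d L d f x = (1 / real L ^ d) *\<^sub>R (\<Sum>y\<in>lattice d L. f y)"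
proof -
  have "avg_kernel L d x y = 1 / real L ^ d" if "y \<in> lattice d L" for y
    using assms that by (simp add: avg_kernel_def lattice_def)
  then show ?thesis
    by (simp add: partial_avg_def scaleR_sum_right)
qed

lemma partial_avg_fun_upd: "partial_avg d L (Suc k) f (x(k := t)) = partial_avg d L (Suc k) f x"
  by (simp add: partial_avg_def avg_kernel_fun_upd)

lemma sum_partial_avg_line:
  assumes "k < d"
  shows "(\<Sum>t<L. partial_avg d L k f (x(k := t))) = real L *\<^sub>R partial_avg d L (Suc k) f x"
proof -
  have "(\<Sum>t<L. partial_avg d L k f (x(k := t)))
      = (\<Sum>y\<in>lattice d L. (\<Sum>t<L. avg_kernel L k (x(k := t)) y) *\<^sub>R f y)"
    unfolding partial_avg_def scaleR_sum_left by (rule sum.swap)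
  also have "\<dots> = real L *\<^sub>R partial_avg d L (Suc k) f x"
    by (simp add: partial_avg_def scaleR_sum_right sum_avg_kernel_line[OF assms] cong: sum.cong)
  finally show ?thesis .
qed

lemma norm_partial_avg_le:
  fixes f :: "(nat \<Rightarrow> nat) \<Rightarrow> 'a::real_normed_vector"
  assumes "k \<le> d" "x \<in> lattice d L" "\<And>y. y \<in> lattice d L \<Longrightarrow> norm (f y) \<le> M"
  shows "norm (partial_avg d L k f x) \<le> M"
proof -
  have "norm (partial_avg d L k f x) \<le> (\<Sum>y\<in>lattice d L. avg_kernel L k x y * M)"
    unfolding partial_avg_def using assms(3) avg_kernel_nonneg
    by (intro order.trans[OF norm_sum] sum_mono) (simp add: mult_left_mono)
  also have "\<dots> = M"
    using sum_avg_kernel[OF assms(1,2)] by (simp flip: sum_distrib_right)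
  finally show ?thesis .
qed

definition line_partial_sum :: "nat \<Rightarrow> ((nat \<Rightarrow> nat) \<Rightarrow> 'a::comm_monoid_add) \<Rightarrow> (nat \<Rightarrow> nat) \<Rightarrow> 'a" where
  "line_partial_sum \<mu> g x = (\<Sum>t\<le>x \<mu>. g (x(\<mu> := t)))"

lemma bwd_diff_line_partial_sum:
  fixes g :: "(nat \<Rightarrow> nat) \<Rightarrow> 'a::ab_group_add"
  assumes "x \<mu> < L" and line_sum: "(\<Sum>t<L. g (x(\<mu> := t))) = 0"
  shows "bwd_diff L (line_partial_sum \<mu> g) \<mu> x = g x"
proof (cases "x \<mu>")
  case 0
  then have "line_partial_sum \<mu> g (shift_back L x \<mu>) = (\<Sum>t<L. g (x(\<mu> := t)))"
    using assms(1) by (simp add: shift_back_def line_partial_sum_def lessThan_Suc_atMost [symmetric])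
  then show ?thesis
    using 0 line_sum by (simp add: bwd_diff_def line_partial_sum_def fun_upd_idem)
next
  case (Suc m)
  then have "shift_back L x \<mu> = x(\<mu> := m)"
    using assms(1) by (simp add: shift_back_def)
  moreover have "x(\<mu> := Suc m) = x"
    using Suc by auto
  ultimately show ?thesis
    using Suc by (simp add: bwd_diff_def line_partial_sum_def)
qed

lemma norm_line_partial_sum_le:
  fixes g :: "(nat \<Rightarrow> nat) \<Rightarrow> 'a::real_normed_vector"
  assumes "x \<mu> < L" and bound: "\<And>t. t < L \<Longrightarrow> norm (g (x(\<mu> := t))) \<le> B"
  shows "norm (line_partial_sum \<mu> g x) \<le> real L * B"
proof -
  have B: "B \<ge> 0"
    using order_trans[OF norm_ge_zero bound[of 0]] assms(1) by simp
  have "norm (line_partial_sum \<mu> g x) \<le> (\<Sum>t\<le>x \<mu>. B)"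
    unfolding line_partial_sum_def using assms(1)
    by (intro order.trans[OF norm_sum] sum_mono bound) simp
  also have "\<dots> \<le> real L * B"
    using assms(1) B by (simp add: mult_right_mono)
  finally show ?thesis .
qed

definition current_kernel :: "nat \<Rightarrow> nat \<Rightarrow> (nat \<Rightarrow> nat) \<Rightarrow> (nat \<Rightarrow> nat) \<Rightarrow> real" where
  "current_kernel L \<mu> x y =
     (\<Sum>t\<le>x \<mu>. avg_kernel L \<mu> (x(\<mu> := t)) y - avg_kernel L (Suc \<mu>) (x(\<mu> := t)) y)"

lemma current_kernel_eq_line_partial_sum:
  "(\<Sum>y\<in>lattice d L. current_kernel L \<mu> x y *\<^sub>R f y)
     = line_partial_sum \<mu> (\<lambda>z. partial_avg d L \<mu> f z - partial_avg d L (Suc \<mu>) f z) x"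
  by (simp add: current_kernel_def line_partial_sum_def partial_avg_def scaleR_sum_left
      scaleR_left_diff_distrib sum_subtractf sum.swap[of _ "lattice d L"])

lemma divergence_current:
  fixes f :: "(nat \<Rightarrow> nat) \<Rightarrow> 'a::real_vector"
  assumes "(\<Sum>y\<in>lattice d L. f y) = 0" and x: "x \<in> lattice d L"
  shows "(\<Sum>\<mu><d. bwd_diff L (\<lambda>z. \<Sum>y\<in>lattice d L. current_kernel L \<mu> z y *\<^sub>R f y) \<mu> x) = f x"
proof -
  have "bwd_diff L (\<lambda>z. \<Sum>y\<in>lattice d L. current_kernel L \<mu> z y *\<^sub>R f y) \<mu> x
      = partial_avg d L \<mu> f x - partial_avg d L (Suc \<mu>) f x" if "\<mu> < d" for \<mu>
    unfolding current_kernel_eq_line_partial_sum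
    using lattice_coord_less[OF x that] sum_partial_avg_line[OF that]
    by (intro bwd_diff_line_partial_sum) (simp_all add: sum_subtractf partial_avg_fun_upd sum_constant_scaleR)
  then have "(\<Sum>\<mu><d. bwd_diff L (\<lambda>z. \<Sum>y\<in>lattice d L. current_kernel L \<mu> z y *\<^sub>R f y) \<mu> x)
      = (\<Sum>\<mu><d. partial_avg d L \<mu> f x - partial_avg d L (Suc \<mu>) f x)"
    by simp
  also have "\<dots> = partial_avg d L 0 f x - partial_avg d L d f x"
    by (rule sum_lessThan_telescope')
  also have "\<dots> = f x"
    using assms by (simp add: partial_avg_0 partial_avg_full)
  finally show ?thesis .
qed

lemma norm_current_le:
  fixes f :: "(nat \<Rightarrow> nat) \<Rightarrow> 'a::real_normed_vector"
  assumes "x \<in> lattice d L" "\<mu> < d" and bound: "\<And>y. y \<in> lattice d L \<Longrightarrow> norm (f y) \<le> M"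
  shows "norm (\<Sum>y\<in>lattice d L. current_kernel L \<mu> x y *\<^sub>R f y) \<le> 2 * real L * M"
proof -
  have "norm (partial_avg d L \<mu> f z - partial_avg d L (Suc \<mu>) f z) \<le> M + M"
    if "z \<in> lattice d L" for z
    using that assms(2) norm_partial_avg_le[OF _ _ bound]
    by (intro order.trans[OF norm_triangle_ineq4] add_mono) simp_all
  then have "norm (line_partial_sum \<mu> (\<lambda>z. partial_avg d L \<mu> f z - partial_avg d L (Suc \<mu>) f z) x)
      \<le> real L * (M + M)"
    using assms(1,2) by (intro norm_line_partial_sum_le) (simp_all add: lattice_coord_less fun_upd_in_lattice)
  then show ?thesis
    unfolding current_kernel_eq_line_partial_sum by simp
qed

theorem lemma3p1:
  fixes d L :: nat
  assumes "d \<ge> 1" and "L \<ge> 1"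
  shows "\<exists>\<beta> :: nat \<Rightarrow> (nat \<Rightarrow> nat) \<Rightarrow> (nat \<Rightarrow> nat) \<Rightarrow> real.
           \<forall>c :: (nat \<Rightarrow> nat) \<Rightarrow> complex.
             (\<Sum>x\<in>lattice d L. c x) = 0 \<longrightarrow>
             (let b = (\<lambda>\<mu> x. \<Sum>y\<in>lattice d L. complex_of_real (\<beta> \<mu> x y) * c y)
              in (\<forall>x\<in>lattice d L. (\<Sum>\<mu><d. bwd_diff L (b \<mu>) \<mu> x) = c x) \<and>
                 (\<forall>x\<in>lattice d L. \<forall>\<mu><d.
                    norm (b \<mu> x) \<le> 2 * real L * Max ((\<lambda>y. norm (c y)) ` lattice d L)))"
proof (intro exI allI impI)
  fix c :: "(nat \<Rightarrow> nat) \<Rightarrow> complex"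
  assume "(\<Sum>x\<in>lattice d L. c x) = 0"
  moreover have "norm (c y) \<le> Max ((\<lambda>y. norm (c y)) ` lattice d L)" if "y \<in> lattice d L" for y
    using that finite_lattice by simp
  ultimately show "let b = (\<lambda>\<mu> x. \<Sum>y\<in>lattice d L. complex_of_real (current_kernel L \<mu> x y) * c y)
    in (\<forall>x\<in>lattice d L. (\<Sum>\<mu><d. bwd_diff L (b \<mu>) \<mu> x) = c x) \<and>
       (\<forall>x\<in>lattice d L. \<forall>\<mu><d.
          norm (b \<mu> x) \<le> 2 * real L * Max ((\<lambda>y. norm (c y)) ` lattice d L))"
    unfolding Let_def scaleR_conv_of_real [symmetric]
    using divergence_current norm_current_le by blast
qed

end
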